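(* Let $n,k$ be positive integers, $F\subseteq\{1,\dots,n\}$ with $|F|=k$, and $0<\eta\le\frac1{4k}$. Let $x(t)\in\{0,1\}^n$ satisfy, for every $t\ge0$, $x_i(t)=1$ for $i\in F$ and $x_i(t)=0$ for $i\notin F$. Let $w(0)\in\mathbb R^n$ have all coordinates equal with $0<w_i(0)<\frac1{\sqrt k}$ for every $i$, and for $t\ge1$ define $w(t)=w(t-1)+\eta\,z(t-1)\big(x(t-1)-z(t-1)w(t-1)\big)$ where $z(t-1)=w(t-1)\cdot x(t-1)$. Then for every $t\ge1$: (1) all $w_i(t)$, $i\in F$, are equal, and all $w_i(t)$, $i\notin F$, are equal; (2) $0<w_i(t)<\frac1{\sqrt k}$ for every $i$; (3) $w_i(t)>w_i(0)$ for every $i\in F$; (4) $w_i(t)<w_i(0)$ for every $i\notin F$.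
   Context: This describes repeated application of Oja's learning rule to a single neuron that is engaged in learning at every step and always receives the same input vector. *)

theory Defs
  imports Complex_Main
begin

text \<open>Vectors in R^n are represented as functions nat => real, with coordinates indexed by 1..n.
  The dot product is the sum over 1..n.\<close>

definition dotn :: "nat \<Rightarrow> (nat \<Rightarrow> real) \<Rightarrow> (nat \<Rightarrow> real) \<Rightarrow> real" where
  "dotn n u v = (\<Sum>i=1..n. u i * v i)"

definition oja_step :: "nat \<Rightarrow> real \<Rightarrow> (nat \<Rightarrow> real) \<Rightarrow> (nat \<Rightarrow> real) \<Rightarrow> (nat \<Rightarrow> real)" where
  "oja_step n \<eta> xv w = (let z = dotn n w xv in (\<lambda>i. w i + \<eta> * z * (xv i - z * w i)))"

primrec oja_iter :: "nat \<Rightarrow> real \<Rightarrow> (nat \<Rightarrow> nat \<Rightarrow> real) \<Rightarrow> (nat \<Rightarrow> real) \<Rightarrow> nat \<Rightarrow> (nat \<Rightarrow> real)" where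
  "oja_iter n \<eta> x w0 0 = w0"
| "oja_iter n \<eta> x w0 (Suc t) = oja_step n \<eta> (x t) (oja_iter n \<eta> x w0 t)"

end

theory Submission
  imports Defs
begin

text \<open>With a constant input that is the indicator of \<open>F\<close>, coordinate symmetry keeps the weight
  vector constant on \<open>F\<close> (value \<open>a\<close>) and on its complement, and \<open>z = k a\<close>. Writing \<open>s = k a\<^sup>2\<close>,
  the active weight is multiplied by \<open>1 + \<eta> k (1 - s)\<close> > 1 and every inactive weight by
  \<open>1 - \<eta> k s\<close> \<in> (0,1). The only real work is that \<open>s < 1\<close> persists: the new value is
  \<open>s (1 + \<eta> k (1 - s))\<^sup>2\<close>, which stays below 1 as long as \<open>\<eta> k \<le> 1/2\<close>.\<close>

lemma gain_square_less_one:
  fixes s c :: real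
  assumes "0 \<le> s" "s < 1" "0 < c" "c \<le> 1/2"
  shows "s * (1 + c * (1 - s))\<^sup>2 < 1"
proof -
  define u where "u = 1 - s"
  have u: "0 < u" "u \<le> 1" using assms by (auto simp: u_def)
  define q where "q = (2 * c - 1) + c * u * (c - 2) - (c * u)\<^sup>2"
  have eq: "s * (1 + c * (1 - s))\<^sup>2 - 1 = u * q"
    unfolding u_def q_def by (simp add: power2_eq_square algebra_simps)
  have "c * u * (c - 2) < 0"
    using u assms by (simp add: mult_pos_neg)
  then have "q < 0"
    unfolding q_def using assms(4) zero_le_power2[of "c * u"] by linarith
  then have "u * q < 0"
    using u by (simp add: mult_pos_neg)
  with eq show ?thesis by linarith
qed

lemma less_inverse_sqrt_iff:
  fixes v :: real
  assumes "0 < v" and "0 < k"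
  shows "v < 1 / sqrt (real k) \<longleftrightarrow> real k * v\<^sup>2 < 1"
proof -
  have "v < 1 / sqrt (real k) \<longleftrightarrow> v * sqrt (real k) < 1"
    using assms by (simp add: field_simps)
  also have "v * sqrt (real k) = sqrt (real k * v\<^sup>2)"
    using assms by (simp add: real_sqrt_mult)
  finally show ?thesis by simp
qed

locale oja_indicator_input =
  fixes n :: nat and F :: "nat set" and \<eta> :: real
    and x :: "nat \<Rightarrow> nat \<Rightarrow> real" and w0 :: "nat \<Rightarrow> real"
  assumes F_subset: "F \<subseteq> {1..n}" and F_nonempty: "F \<noteq> {}"
    and eta_pos: "0 < \<eta>" and eta_card_le: "\<eta> * real (card F) \<le> 1/2"
    and x_active: "\<And>t i. i \<in> F \<Longrightarrow> x t i = 1"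
    and x_inactive: "\<And>t i. i \<notin> F \<Longrightarrow> x t i = 0"
    and w0_active_eq: "\<And>i j. i \<in> F \<Longrightarrow> j \<in> F \<Longrightarrow> w0 i = w0 j"
    and w0_active_pos: "\<And>i. i \<in> F \<Longrightarrow> 0 < w0 i"
    and w0_active_bound: "\<And>i. i \<in> F \<Longrightarrow> real (card F) * (w0 i)\<^sup>2 < 1"
begin

abbreviation k :: real where "k \<equiv> real (card F)"

abbreviation W :: "nat \<Rightarrow> nat \<Rightarrow> real" where "W \<equiv> oja_iter n \<eta> x w0"

lemma k_pos: "0 < k"
  using F_nonempty finite_subset[OF F_subset] by (simp add: card_gt_0_iff)

lemma dotn_active_const:
  assumes "\<forall>i\<in>F. w i = a"
  shows "dotn n w (x t) = k * a"
proof -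
  have "dotn n w (x t) = (\<Sum>i\<in>F. w i * x t i)"
    unfolding dotn_def using F_subset x_inactive by (intro sum.mono_neutral_right) auto
  also have "\<dots> = (\<Sum>i\<in>F. a)" using assms x_active by simp
  finally show ?thesis by simp
qed

lemma oja_step_active:
  assumes "\<forall>i\<in>F. w i = a" and "i \<in> F"
  shows "oja_step n \<eta> (x t) w i = a * (1 + \<eta> * k * (1 - k * a\<^sup>2))"
proof -
  have "w i = a" "x t i = 1" using assms x_active by auto
  then show ?thesis
    by (simp add: oja_step_def dotn_active_const[OF assms(1)] power2_eq_square algebra_simps)
qed

lemma oja_step_inactive:
  assumes "\<forall>i\<in>F. w i = a" and "i \<notin> F"
  shows "oja_step n \<eta> (x t) w i = (1 - \<eta> * k * (k * a\<^sup>2)) * w i"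
proof -
  have "x t i = 0" using assms x_inactive by auto
  then show ?thesis
    by (simp add: oja_step_def dotn_active_const[OF assms(1)] power2_eq_square algebra_simps)
qed

lemma active_gain:
  assumes "0 < a" and "k * a\<^sup>2 < 1"
  defines "a' \<equiv> a * (1 + \<eta> * k * (1 - k * a\<^sup>2))"
  shows "a < a'" and "k * a'\<^sup>2 < 1"
proof -
  have "0 < \<eta> * k" using eta_pos k_pos by simp
  then have "0 < a * (\<eta> * k * (1 - k * a\<^sup>2))" using assms(1,2) by simp
  then show "a < a'" by (simp add: a'_def algebra_simps)
  have "k * a'\<^sup>2 = k * a\<^sup>2 * (1 + \<eta> * k * (1 - k * a\<^sup>2))\<^sup>2"
    by (simp add: a'_def power_mult_distrib)
  also have "\<dots> < 1"
    using gain_square_less_one[OF _ assms(2) \<open>0 < \<eta> * k\<close> eta_card_le] k_pos by simp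
  finally show "k * a'\<^sup>2 < 1" .
qed

lemma active_invariant: "\<exists>a. (\<forall>i\<in>F. W t i = a) \<and> 0 < a \<and> k * a\<^sup>2 < 1"
proof (induction t)
  case 0
  obtain j where "j \<in> F" using F_nonempty by blast
  then have "\<forall>i\<in>F. W 0 i = w0 j" "0 < w0 j" "k * (w0 j)\<^sup>2 < 1"
    using w0_active_pos w0_active_bound by (auto intro: w0_active_eq)
  then show ?case by blast
next
  case (Suc t)
  then obtain a where a: "\<forall>i\<in>F. W t i = a" "0 < a" "k * a\<^sup>2 < 1" by blast
  then show ?case
    using active_gain[OF a(2,3)] oja_step_active[OF a(1)]
    by (intro exI[of _ "a * (1 + \<eta> * k * (1 - k * a\<^sup>2))"]) auto
qed

lemma active_strict_mono:
  assumes "i \<in> F"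
  shows "W t i < W (Suc t) i"
proof -
  obtain a where a: "\<forall>i\<in>F. W t i = a" "0 < a" "k * a\<^sup>2 < 1"
    using active_invariant by blast
  then show ?thesis
    using assms active_gain(1)[OF a(2,3)] oja_step_active[OF a(1) assms] by simp
qed

lemma inactive_step: "\<exists>\<rho>. 0 < \<rho> \<and> \<rho> < 1 \<and> (\<forall>i. i \<notin> F \<longrightarrow> W (Suc t) i = \<rho> * W t i)"
proof -
  obtain a where a: "\<forall>i\<in>F. W t i = a" "0 < a" "k * a\<^sup>2 < 1"
    using active_invariant by blast
  have "0 < \<eta> * k * (k * a\<^sup>2)"
    using a eta_pos k_pos by simp
  moreover have "\<eta> * k * (k * a\<^sup>2) \<le> \<eta> * k"
    using a(3) eta_pos k_pos by (intro mult_left_le) auto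
  ultimately show ?thesis
    using a(1) oja_step_inactive eta_card_le
    by (intro exI[of _ "1 - \<eta> * k * (k * a\<^sup>2)"]) auto
qed

lemma inactive_decay: "\<exists>\<rho>. 0 < \<rho> \<and> \<rho> < 1 \<and> (\<forall>i. i \<notin> F \<longrightarrow> W (Suc t) i = \<rho> * w0 i)"
proof (induction t)
  case 0
  show ?case using inactive_step[of 0] by simp
next
  case (Suc t)
  obtain \<rho> where \<rho>: "0 < \<rho>" "\<rho> < 1" "\<forall>i. i \<notin> F \<longrightarrow> W (Suc t) i = \<rho> * w0 i"
    using Suc by blast
  obtain \<sigma> where \<sigma>: "0 < \<sigma>" "\<sigma> < 1" "\<forall>i. i \<notin> F \<longrightarrow> W (Suc (Suc t)) i = \<sigma> * W (Suc t) i"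
    using inactive_step by blast
  have "\<sigma> * \<rho> < 1" using \<rho> \<sigma> mult_strict_mono[of \<sigma> 1 \<rho> 1] by simp
  then show ?case using \<rho> \<sigma> by (intro exI[of _ "\<sigma> * \<rho>"]) simp
qed

lemma active_eq:
  assumes "i \<in> F" and "j \<in> F"
  shows "W t i = W t j"
  using active_invariant[of t] assms by auto

lemma active_bounded:
  assumes "i \<in> F"
  shows "0 < W t i" and "k * (W t i)\<^sup>2 < 1"
  using active_invariant[of t] assms by auto

lemma active_above_initial:
  assumes "i \<in> F" and "0 < t"
  shows "w0 i < W t i"
proof -
  have "W 0 i < W t i"
    using assms(2) by (intro lift_Suc_mono_less[of "\<lambda>t. W t i", OF active_strict_mono[OF assms(1)]])
  then show ?thesis by simp
qed

lemma inactive_eq: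
  assumes "i \<notin> F" and "j \<notin> F" and "w0 i = w0 j" and "0 < t"
  shows "W t i = W t j"
proof -
  obtain s where "t = Suc s" using assms(4) gr0_implies_Suc by blast
  then show ?thesis using inactive_decay[of s] assms(1-3) by auto
qed

lemma inactive_below_initial:
  assumes "i \<notin> F" and "0 < w0 i" and "0 < t"
  shows "0 < W t i" and "W t i < w0 i"
proof -
  obtain s where "t = Suc s" using assms(3) gr0_implies_Suc by blast
  then obtain \<rho> where "0 < \<rho>" "\<rho> < 1" "W t i = \<rho> * w0 i"
    using inactive_decay[of s] assms(1) by blast
  then show "0 < W t i" and "W t i < w0 i" using assms(2) by simp_all
qed

end

theorem mainTheorem9:
  fixes n k :: nat and F :: "nat set" and \<eta> :: real
    and x :: "nat \<Rightarrow> nat \<Rightarrow> real" and w0 :: "nat \<Rightarrow> real"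
  assumes "n > 0" and "k > 0"
    and "F \<subseteq> {1..n}" and "card F = k"
    and "0 < \<eta>" and "\<eta> \<le> 1 / (4 * real k)"
    and "\<And>t i. i \<in> F \<Longrightarrow> x t i = 1"
    and "\<And>t i. i \<notin> F \<Longrightarrow> x t i = 0"
    and "\<And>i j. i \<in> {1..n} \<Longrightarrow> j \<in> {1..n} \<Longrightarrow> w0 i = w0 j"
    and "\<And>i. i \<in> {1..n} \<Longrightarrow> 0 < w0 i \<and> w0 i < 1 / sqrt (real k)"
  shows "\<forall>t\<ge>1.
      (\<forall>i\<in>F. \<forall>j\<in>F. oja_iter n \<eta> x w0 t i = oja_iter n \<eta> x w0 t j)
    \<and> (\<forall>i\<in>{1..n} - F. \<forall>j\<in>{1..n} - F. oja_iter n \<eta> x w0 t i = oja_iter n \<eta> x w0 t j)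
    \<and> (\<forall>i\<in>{1..n}. 0 < oja_iter n \<eta> x w0 t i \<and> oja_iter n \<eta> x w0 t i < 1 / sqrt (real k))
    \<and> (\<forall>i\<in>F. oja_iter n \<eta> x w0 t i > w0 i)
    \<and> (\<forall>i\<in>{1..n} - F. oja_iter n \<eta> x w0 t i < w0 i)"
proof -
  have w0_bound: "real k * (w0 i)\<^sup>2 < 1" if "i \<in> {1..n}" for i
    using less_inverse_sqrt_iff[of "w0 i" k] assms(2) assms(10)[OF that] by simp
  have "\<eta> * real k \<le> 1 / 4"
    using assms(2,6) by (simp add: field_simps)
  moreover have "F \<noteq> {}"
    using assms(2,4) by auto
  ultimately interpret oja_indicator_input n F \<eta> x w0
  proof unfold_locales
    show "w0 i = w0 j" if "i \<in> F" "j \<in> F" for i j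
      using that assms(3) by (intro assms(9)) auto
  qed (use assms(3-5,7,8,10) w0_bound in auto)
  show ?thesis
  proof (intro allI impI conjI ballI)
    fix t :: nat
    assume "1 \<le> t"
    then have "0 < t" by simp
    show "W t i = W t j" if "i \<in> F" "j \<in> F" for i j
      using active_eq that .
    show "W t i = W t j" if "i \<in> {1..n} - F" "j \<in> {1..n} - F" for i j
      using inactive_eq \<open>0 < t\<close> that assms(9)[of i j] by simp
    show "w0 i < W t i" if "i \<in> F" for i
      using active_above_initial that \<open>0 < t\<close> .
    show "W t i < w0 i" if "i \<in> {1..n} - F" for i
      using inactive_below_initial that \<open>0 < t\<close> assms(10)[of i] by simp
    show "0 < W t i" "W t i < 1 / sqrt (real k)" if "i \<in> {1..n}" for i
    proof -
      have w0_i: "0 < w0 i" "w0 i < 1 / sqrt (real k)" using assms(10) that by auto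
      have "0 < W t i \<and> W t i < 1 / sqrt (real k)"
      proof (cases "i \<in> F")
        case True
        then show ?thesis
          using active_bounded less_inverse_sqrt_iff[of "W t i" k] assms(2,4) by simp
      next
        case False
        then show ?thesis
          using inactive_below_initial[OF False w0_i(1) \<open>0 < t\<close>] w0_i(2) by simp
      qed
      then show "0 < W t i" "W t i < 1 / sqrt (real k)" by simp_all
    qed
  qed
qed

end
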